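(* For every positive integer $n\notin\{1,2,4\}$, $A'(n,4,3)=A(n,4,3)$. Moreover, $A'(1,4,3)=A'(2,4,3)=1$ and $A'(4,4,3)=2$.
   Context: For ${\sf u},{\sf v}\in\mathbb{F}_2^n$, $\Delta({\sf u},{\sf v})$ is the Hamming distance and ${\rm wt}({\sf u})$ the Hamming weight. $A'(n,d,e)$ denotes the maximum size of a nonempty set $S\subseteq \mathbb{F}_2^n$ such that ${\rm wt}({\sf u})\le e$ for all ${\sf u}\in S$ and $\Delta({\sf u},{\sf v})\ge d$ for all distinct ${\sf u},{\sf v}\in S$. $A(n,d,e)$ denotes the maximum size of a set $S\subseteq\mathbb{F}_2^n$ all of whose elements have weight exactly $e$ and with pairwise distances at least $d$ (the maximum size of a constant-weight code). It is known that $A(n,4,3)=\left\lfloor \frac{n}{3} \left\lfloor \frac{n-1}{2} \right\rfloor \right\rfloor-1$ if $n\equiv 5 \pmod 6$ and $A(n,4,3)=\left\lfloor \frac{n}{3} \left\lfloor \frac{n-1}{2} \right\rfloor \right\rfloor$ otherwise. *)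

theory Defs
  imports Main
begin

text \<open>Vectors of F_2^n are bool lists of length n (True = 1).\<close>

definition F2 :: "nat \<Rightarrow> bool list set" where
  "F2 n = {u. length u = n}"

definition wt :: "bool list \<Rightarrow> nat" where
  "wt u = length (filter id u)"

definition hdist :: "bool list \<Rightarrow> bool list \<Rightarrow> nat" where
  "hdist u v = card {i. i < length u \<and> u ! i \<noteq> v ! i}"

definition A' :: "nat \<Rightarrow> nat \<Rightarrow> nat \<Rightarrow> nat" where
  "A' n d e = Max {card S | S. S \<subseteq> F2 n \<and> S \<noteq> {} \<and> (\<forall>u\<in>S. wt u \<le> e)
      \<and> (\<forall>u\<in>S. \<forall>v\<in>S. u \<noteq> v \<longrightarrow> hdist u v \<ge> d)}"

definition A :: "nat \<Rightarrow> nat \<Rightarrow> nat \<Rightarrow> nat" where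
  "A n d e = Max {card S | S. S \<subseteq> F2 n \<and> (\<forall>u\<in>S. wt u = e)
      \<and> (\<forall>u\<in>S. \<forall>v\<in>S. u \<noteq> v \<longrightarrow> hdist u v \<ge> d)}"

end

theory Submission
  imports Defs
begin

text \<open>
  Words are identified with their supports, so a code is a family of subsets of
  {0..<n} with pairwise symmetric differences of size at least 4. Since
  card (X - Y \<union> (Y - X)) = card X + card Y - 2 card (X \<inter> Y), a code of weight at most 3
  contains the empty set only on its own, a singleton {p} only together with triples
  avoiding p, and otherwise its pairs are disjoint from each other and from its triples;
  two triples of the code share at most one point. Each such code is turned into a family
  of triples that is at least as large: add a point missed by all pairs to every pair; if
  the pairs cover all points, rebuild the perfect matching (of at least three pairs) into
  triples; replace {p} by {p, x, y} for a pair x, y not yet covered; and if the triples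
  cover every pair of the remaining n - 1 \<ge> 4 points, trade three of them for four triples
  through p. For n = 4 the last step is impossible and {{0}, {1, 2, 3}} is optimal, while
  for n < 4 no two words are at distance 4.
\<close>

section \<open>Codes as families of sets\<close>

definition vec :: "nat \<Rightarrow> nat set \<Rightarrow> bool list" where
  "vec n X = map (\<lambda>i. i \<in> X) [0..<n]"

lemma bij_betw_vec: "bij_betw (vec n) (Pow {..<n}) (F2 n)"
  by (rule bij_betw_byWitness[where f' = "\<lambda>u. {i. i < n \<and> u ! i}"])
    (auto simp: vec_def F2_def intro!: nth_equalityI)

lemma wt_vec: "wt (vec n X) = card (X \<inter> {..<n})"
  by (simp add: wt_def vec_def filter_map comp_def distinct_length_filter Int_commute atLeast0LessThan)

lemma hdist_vec: "hdist (vec n X) (vec n Y) = card (sym_diff X Y \<inter> {..<n})"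
  unfolding hdist_def vec_def by (rule arg_cong[where f = card]) auto

lemma card_subsets_F2_eq:
  "{card S | S. S \<subseteq> F2 n \<and> P S} = {card F | F. F \<subseteq> Pow {..<n} \<and> P (vec n ` F)}"
proof -
  have bij: "bij_betw (image (vec n)) (Pow (Pow {..<n})) (Pow (F2 n))"
    using bij_betw_Pow[OF bij_betw_vec] .
  have card: "card (vec n ` F) = card F" if "F \<subseteq> Pow {..<n}" for F
    using that bij_betw_vec by (meson bij_betw_imp_inj_on card_image inj_on_subset)
  show ?thesis
  proof (intro equalityI subsetI)
    fix k assume "k \<in> {card S | S. S \<subseteq> F2 n \<and> P S}"
    then obtain S where S: "S \<subseteq> F2 n" "P S" "k = card S" by blast
    then obtain F where "F \<subseteq> Pow {..<n}" "S = vec n ` F"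
      using bij by (metis PowD PowI bij_betw_imp_surj_on imageE)
    then show "k \<in> {card F | F. F \<subseteq> Pow {..<n} \<and> P (vec n ` F)}"
      using S card by auto
  next
    fix k assume "k \<in> {card F | F. F \<subseteq> Pow {..<n} \<and> P (vec n ` F)}"
    then obtain F where "F \<subseteq> Pow {..<n}" "P (vec n ` F)" "k = card F" by blast
    moreover have "vec n ` F \<subseteq> F2 n" by (auto simp: F2_def vec_def)
    ultimately show "k \<in> {card S | S. S \<subseteq> F2 n \<and> P S}"
      using card by (metis (mono_tags, lifting) mem_Collect_eq)
  qed
qed

definition set_code :: "nat \<Rightarrow> nat \<Rightarrow> nat set set \<Rightarrow> bool" where
  "set_code n d F \<longleftrightarrow> F \<subseteq> Pow {..<n} \<and> (\<forall>X\<in>F. \<forall>Y\<in>F. X \<noteq> Y \<longrightarrow> d \<le> card (sym_diff X Y))"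

lemma vec_image_distance_iff:
  assumes "F \<subseteq> Pow {..<n}"
  shows "(\<forall>X\<in>F. \<forall>Y\<in>F. vec n X \<noteq> vec n Y \<longrightarrow> d \<le> hdist (vec n X) (vec n Y))
    \<longleftrightarrow> (\<forall>X\<in>F. \<forall>Y\<in>F. X \<noteq> Y \<longrightarrow> d \<le> card (sym_diff X Y))"
proof -
  have "inj_on (vec n) F"
    using assms bij_betw_vec by (meson bij_betw_imp_inj_on inj_on_subset)
  moreover have "sym_diff X Y \<inter> {..<n} = sym_diff X Y" if "X \<in> F" "Y \<in> F" for X Y
    using that assms by auto
  ultimately show ?thesis
    by (auto simp: hdist_vec inj_on_eq_iff)
qed

lemma vec_image_weight_iff:
  assumes "F \<subseteq> Pow {..<n}"
  shows "(\<forall>X\<in>F. P (wt (vec n X))) \<longleftrightarrow> (\<forall>X\<in>F. P (card X))"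
proof -
  have "X \<inter> {..<n} = X" if "X \<in> F" for X
    using assms that by blast
  then show ?thesis
    by (simp add: wt_vec)
qed

lemma A'_eq_Max_set_code:
  "A' n d e = Max {card F | F. set_code n d F \<and> F \<noteq> {} \<and> (\<forall>X\<in>F. card X \<le> e)}"
proof -
  have "(F \<subseteq> Pow {..<n} \<and> vec n ` F \<noteq> {} \<and> (\<forall>u\<in>vec n ` F. wt u \<le> e)
      \<and> (\<forall>u\<in>vec n ` F. \<forall>v\<in>vec n ` F. u \<noteq> v \<longrightarrow> d \<le> hdist u v))
    \<longleftrightarrow> set_code n d F \<and> F \<noteq> {} \<and> (\<forall>X\<in>F. card X \<le> e)" for F
    by (cases "F \<subseteq> Pow {..<n}")
      (simp_all add: set_code_def vec_image_distance_iff
        vec_image_weight_iff[of F n "\<lambda>w. w \<le> e"] conj_ac)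
  then show ?thesis
    unfolding A'_def card_subsets_F2_eq by simp
qed

lemma A_eq_Max_set_code:
  "A n d e = Max {card F | F. set_code n d F \<and> (\<forall>X\<in>F. card X = e)}"
proof -
  have "(F \<subseteq> Pow {..<n} \<and> (\<forall>u\<in>vec n ` F. wt u = e)
      \<and> (\<forall>u\<in>vec n ` F. \<forall>v\<in>vec n ` F. u \<noteq> v \<longrightarrow> d \<le> hdist u v))
    \<longleftrightarrow> set_code n d F \<and> (\<forall>X\<in>F. card X = e)" for F
    by (cases "F \<subseteq> Pow {..<n}")
      (simp_all add: set_code_def vec_image_distance_iff
        vec_image_weight_iff[of F n "\<lambda>w. w = e"] conj_ac)
  then show ?thesis
    unfolding A_def card_subsets_F2_eq by simp
qed

lemma card_sym_diff_add_card_Int: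
  assumes "finite X" "finite Y"
  shows "card (sym_diff X Y) + 2 * card (X \<inter> Y) = card X + card Y"
proof -
  have "sym_diff X Y = (X \<union> Y) - (X \<inter> Y)" by blast
  then have "card (sym_diff X Y) = card (X \<union> Y) - card (X \<inter> Y)"
    using assms card_Diff_subset[of "X \<inter> Y" "X \<union> Y"] by auto
  moreover have "card (X \<inter> Y) \<le> card (X \<union> Y)"
    using assms by (intro card_mono) auto
  ultimately show ?thesis
    using card_Un_Int[OF assms] by linarith
qed

lemma finite_card_set_codes: "finite {card F | F. set_code n d F \<and> P F}"
proof (rule finite_subset)
  show "{card F | F. set_code n d F \<and> P F} \<subseteq> card ` Pow (Pow {..<n})"
    by (auto simp: set_code_def)
qed simp

lemma set_code_card_le_1:
  assumes "set_code n d F" "n < d"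
  shows "card F \<le> 1"
proof -
  have "X = Y" if "X \<in> F" "Y \<in> F" for X Y
  proof (rule ccontr)
    assume "X \<noteq> Y"
    then have "d \<le> card (sym_diff X Y)"
      using assms(1) that by (auto simp: set_code_def)
    moreover have "card (sym_diff X Y) \<le> n"
      using assms(1) that card_mono[of "{..<n}" "sym_diff X Y"] by (auto simp: set_code_def)
    ultimately show False
      using assms(2) by linarith
  qed
  moreover have "finite F"
    using assms(1) by (auto simp: set_code_def intro: finite_subset)
  ultimately show ?thesis
    by (simp add: card_le_Suc0_iff_eq)
qed

lemma set_code_card_le_2:
  assumes "set_code n n F"
  shows "card F \<le> 2"
proof (cases "F = {}")
  case False
  then obtain X where X: "X \<in> F" by blast
  have "F \<subseteq> {X, {..<n} - X}"
  proof
    fix Y assume Y: "Y \<in> F"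
    show "Y \<in> {X, {..<n} - X}"
    proof (cases "Y = X")
      case False
      have sub: "X \<subseteq> {..<n}" "Y \<subseteq> {..<n}"
        using assms X Y by (auto simp: set_code_def)
      then have "sym_diff X Y \<subseteq> {..<n}" by blast
      moreover have "n \<le> card (sym_diff X Y)"
        using assms X Y False by (auto simp: set_code_def)
      ultimately have "sym_diff X Y = {..<n}"
        by (simp add: card_seteq)
      then show ?thesis
        using sub by blast
    qed simp
  qed
  then show ?thesis
    using card_mono[of "{X, {..<n} - X}" F] card_insert_le_m1[of 2 "{{..<n} - X}" X] by simp
qed simp

section \<open>Packings of triples\<close>

definition triple_packing :: "nat \<Rightarrow> nat set set \<Rightarrow> bool" where
  "triple_packing n G \<longleftrightarrow> G \<subseteq> Pow {..<n} \<and> (\<forall>X\<in>G. card X = 3)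
     \<and> (\<forall>X\<in>G. \<forall>Y\<in>G. X \<noteq> Y \<longrightarrow> card (X \<inter> Y) \<le> 1)"

lemma triple_packing_iff_set_code:
  "triple_packing n G \<longleftrightarrow> set_code n 4 G \<and> (\<forall>X\<in>G. card X = 3)"
proof -
  have meet: "card (X \<inter> Y) \<le> 1 \<longleftrightarrow> 4 \<le> card (sym_diff X Y)"
    if "card X = 3" "card Y = 3" for X Y :: "nat set"
    using card_sym_diff_add_card_Int[of X Y] that card_ge_0_finite[of X] card_ge_0_finite[of Y]
    by linarith
  show ?thesis
  proof (cases "\<forall>X\<in>G. card X = 3")
    case True
    then have "(\<forall>X\<in>G. \<forall>Y\<in>G. X \<noteq> Y \<longrightarrow> card (X \<inter> Y) \<le> 1)
        \<longleftrightarrow> (\<forall>X\<in>G. \<forall>Y\<in>G. X \<noteq> Y \<longrightarrow> 4 \<le> card (sym_diff X Y))"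
      by (intro ball_cong refl imp_cong meet) auto
    with True show ?thesis
      by (simp add: triple_packing_def set_code_def)
  qed (auto simp: triple_packing_def)
qed

lemma triple_packingI:
  assumes "G \<subseteq> Pow {..<n}" "\<And>X. X \<in> G \<Longrightarrow> card X = 3"
    and "\<And>X Y u v. X \<in> G \<Longrightarrow> Y \<in> G \<Longrightarrow> u \<noteq> v \<Longrightarrow> {u, v} \<subseteq> X \<Longrightarrow> {u, v} \<subseteq> Y \<Longrightarrow> X = Y"
  shows "triple_packing n G"
  unfolding triple_packing_def
proof (intro conjI ballI impI)
  fix X Y assume XY: "X \<in> G" "Y \<in> G" "X \<noteq> Y"
  have "finite X"
    using XY(1) assms(2) by (simp add: card_ge_0_finite)
  moreover have "\<forall>a\<in>X \<inter> Y. \<forall>b\<in>X \<inter> Y. a = b"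
    using assms(3)[OF XY(1,2)] XY(3) by blast
  ultimately show "card (X \<inter> Y) \<le> 1"
    by (simp add: card_le_Suc0_iff_eq)
qed (use assms in auto)

lemma triple_packing_pair_unique:
  assumes "triple_packing n G" "X \<in> G" "Y \<in> G" "u \<noteq> v" "{u, v} \<subseteq> X" "{u, v} \<subseteq> Y"
  shows "X = Y"
proof (rule ccontr)
  assume "X \<noteq> Y"
  then have "card (X \<inter> Y) \<le> 1"
    using assms(1-3) by (auto simp: triple_packing_def)
  moreover have "finite X"
    using assms(1,2) by (simp add: triple_packing_def card_ge_0_finite)
  ultimately show False
    using assms(4-6) card_le_Suc0_iff_eq[of "X \<inter> Y"] by auto
qed

lemma triple_packing_subset: "triple_packing n G \<Longrightarrow> H \<subseteq> G \<Longrightarrow> triple_packing n H"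
  unfolding triple_packing_def by blast

lemma triple_packing_Un:
  assumes G: "triple_packing n G" and H: "triple_packing n H"
    and cross: "\<And>X Y u v. X \<in> G \<Longrightarrow> Y \<in> H \<Longrightarrow> u \<noteq> v \<Longrightarrow> {u, v} \<subseteq> X \<Longrightarrow> {u, v} \<subseteq> Y \<Longrightarrow> X = Y"
  shows "triple_packing n (G \<union> H)"
proof (rule triple_packingI)
  show "G \<union> H \<subseteq> Pow {..<n}" "\<And>X. X \<in> G \<union> H \<Longrightarrow> card X = 3"
    using G H by (auto simp: triple_packing_def)
  fix X Y u v assume XY: "X \<in> G \<union> H" "Y \<in> G \<union> H" and uv: "u \<noteq> v" "{u, v} \<subseteq> X" "{u, v} \<subseteq> Y"
  from XY consider "X \<in> G" "Y \<in> G" | "X \<in> H" "Y \<in> H" | "X \<in> G" "Y \<in> H" | "X \<in> H" "Y \<in> G"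
    by blast
  then show "X = Y"
    by cases (use uv triple_packing_pair_unique[OF G] triple_packing_pair_unique[OF H] cross in metis)+
qed

lemma triple_packing_singleton: "X \<subseteq> {..<n} \<Longrightarrow> card X = 3 \<Longrightarrow> triple_packing n {X}"
  by (simp add: triple_packing_def)

lemma triple_packing_insert_image:
  assumes sub: "M \<subseteq> Pow {..<n}" and pairs: "\<And>Q. Q \<in> M \<Longrightarrow> card Q = 2"
    and disj: "\<And>Q Q'. Q \<in> M \<Longrightarrow> Q' \<in> M \<Longrightarrow> Q \<noteq> Q' \<Longrightarrow> Q \<inter> Q' = {}"
    and a: "a < n" "\<And>Q. Q \<in> M \<Longrightarrow> a \<notin> Q"
  shows "triple_packing n (insert a ` M)" "card (insert a ` M) = card M"
proof -
  show "card (insert a ` M) = card M"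
    by (rule card_image, rule inj_onI) (metis a(2) insert_ident)
  show "triple_packing n (insert a ` M)"
  proof (rule triple_packingI)
    show "insert a ` M \<subseteq> Pow {..<n}"
      using sub a(1) by auto
    show "card X = 3" if X: "X \<in> insert a ` M" for X
    proof -
      obtain Q where "Q \<in> M" "X = insert a Q"
        using X by blast
      then show ?thesis
        using a(2) pairs[of Q] card_ge_0_finite[of Q] by simp
    qed
    show "X = Y" if XY: "X \<in> insert a ` M" "Y \<in> insert a ` M"
      and uv: "u \<noteq> v" "{u, v} \<subseteq> X" "{u, v} \<subseteq> Y" for X Y u v
    proof -
      obtain Q Q' where "Q \<in> M" "Q' \<in> M" "X = insert a Q" "Y = insert a Q'"
        using XY by blast
      moreover from this have "Q \<inter> Q' \<noteq> {}"
        using uv by (cases "u = a") auto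
      ultimately show ?thesis
        using disj by blast
    qed
  qed
qed

lemma triple_packing_of_matching:
  assumes sub: "M \<subseteq> Pow {..<n}" and pairs: "\<And>Q. Q \<in> M \<Longrightarrow> card Q = 2"
    and disj: "\<And>Q Q'. Q \<in> M \<Longrightarrow> Q' \<in> M \<Longrightarrow> Q \<noteq> Q' \<Longrightarrow> Q \<inter> Q' = {}"
    and three: "3 \<le> card M"
  shows "\<exists>G. triple_packing n G \<and> card G = card M"
proof -
  obtain W where W: "W \<subseteq> M" "card W = 3"
    by (meson three obtain_subset_with_card_n)
  then obtain P1 P2 P3 where P: "P1 \<in> M" "P2 \<in> M" "P3 \<in> M" "P1 \<noteq> P2" "P2 \<noteq> P3" "P1 \<noteq> P3"
    by (auto simp: card_3_iff)
  obtain a1 b1 where P1: "P1 = {a1, b1}" "a1 \<noteq> b1" using pairs[OF P(1)] by (auto simp: card_2_iff)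
  obtain a2 b2 where P2: "P2 = {a2, b2}" using pairs[OF P(2)] by (auto simp: card_2_iff)
  obtain a3 b3 where P3: "P3 = {a3, b3}" using pairs[OF P(3)] by (auto simp: card_2_iff)
  define N M' where "N = {b1, a2, a3}" and "M' = M - {P1}"
  have a1: "a1 \<notin> Q" if "Q \<in> M'" for Q
    using disj[of P1 Q] that P(1) P1 by (auto simp: M'_def)
  have "a1 < n"
    using sub P(1) P1 by auto
  then have image: "triple_packing n (insert a1 ` M')" "card (insert a1 ` M') = card M'"
    using sub pairs disj a1 by (intro triple_packing_insert_image; auto simp: M'_def)+
  have "a1 \<notin> N"
    using disj[OF P(1,2,4)] disj[OF P(1,3,6)] P1 P2 P3 by (auto simp: N_def)
  have "triple_packing n ({N} \<union> insert a1 ` M')"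
  proof (rule triple_packing_Un[OF triple_packing_singleton image(1)])
    show "N \<subseteq> {..<n}"
      using sub P(1-3) unfolding N_def P1(1) P2 P3 by blast
    show "card N = 3"
      using disj[OF P(1,2,4)] disj[OF P(1,3,6)] disj[OF P(2,3,5)] P1 P2 P3 by (auto simp: N_def)
    fix X Y u v
    assume X: "X \<in> {N}" and Y: "Y \<in> insert a1 ` M'" and uv: "u \<noteq> v" "{u, v} \<subseteq> X" "{u, v} \<subseteq> Y"
    obtain Q where Q: "Q \<in> M'" "Y = insert a1 Q"
      using Y by blast
    have "u \<in> Q" "v \<in> Q"
      using X Q(2) uv(2,3) \<open>a1 \<notin> N\<close> by auto
    moreover have "b1 \<notin> Q"
      using disj[of P1 Q] Q(1) P(1) P1 by (auto simp: M'_def)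
    ultimately have "u \<in> {a2, a3}" "v \<in> {a2, a3}"
      using X uv(2) unfolding N_def by auto
    then have "a2 \<in> Q" "a3 \<in> Q"
      using \<open>u \<in> Q\<close> \<open>v \<in> Q\<close> uv(1) by blast+
    then have "Q = P2" "Q = P3"
      using disj[of Q P2] disj[of Q P3] Q(1) P(2,3) unfolding P2 P3 M'_def by blast+
    then show "X = Y"
      using P(5) by simp
  qed
  moreover have "card ({N} \<union> insert a1 ` M') = card M"
  proof -
    have "finite M"
      using three by (metis card.infinite not_numeral_le_zero)
    moreover have "N \<notin> insert a1 ` M'"
      using \<open>a1 \<notin> N\<close> by blast
    ultimately show ?thesis
      using image(2) card_Suc_Diff1[OF \<open>finite M\<close> P(1)] by (simp add: M'_def)
  qed
  ultimately show ?thesis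
    by blast
qed

lemma card_3_distinct:
  assumes "card {a, b, c} = 3"
  shows "a \<noteq> b" "a \<noteq> c" "b \<noteq> c"
  using assms by (auto simp: card_insert_if split: if_splits)

lemma card_3_obtain:
  assumes "card X = 3" "a \<in> X" "b \<in> X" "a \<noteq> b"
  obtains z where "X = {a, b, z}"
  using assms by (auto simp: card_3_iff)

lemma triple_packing_other_point:
  assumes "triple_packing n T" "X \<in> T" "Y \<in> T" "X \<noteq> Y" "u \<in> X" "u \<in> Y" "w \<in> Y" "w \<noteq> u"
  shows "w \<notin> X"
  using triple_packing_pair_unique[OF assms(1-3), of u w] assms(4-8) by blast

lemma triple_packing_trade_distinct:
  assumes T: "triple_packing n T" and p: "\<forall>X\<in>T. p \<notin> X"
    and in1: "{c, x1, y1} \<in> T" and in2: "{c, x2, y2} \<in> T" and in3: "{x1, x2, z} \<in> T"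
    and ne: "{c, x1, y1} \<noteq> {c, x2, y2}"
  shows "distinct [p, c, x1, y1, x2, y2, z]"
proof -
  note other = triple_packing_other_point[OF T]
  have "card {c, x1, y1} = 3" "card {c, x2, y2} = 3" "card {x1, x2, z} = 3"
    using T in1 in2 in3 by (auto simp: triple_packing_def)
  note d = this[THEN card_3_distinct(1)] this[THEN card_3_distinct(2)] this[THEN card_3_distinct(3)]
  have x2y2: "x2 \<notin> {c, x1, y1}" "y2 \<notin> {c, x1, y1}" and x1: "x1 \<notin> {c, x2, y2}"
    by (rule other[OF in1 in2 ne, of c] other[OF in2 in1 ne[symmetric], of c]; use d in simp)+
  then have "{c, x1, y1} \<noteq> {x1, x2, z}" "{c, x2, y2} \<noteq> {x1, x2, z}"
    by (metis insertCI)+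
  then have z: "z \<notin> {c, x1, y1}" "z \<notin> {c, x2, y2}"
    using other[OF in1 in3, of x1 z] other[OF in2 in3, of x2 z] d by auto
  show ?thesis
    using bspec[OF p in1] bspec[OF p in2] bspec[OF p in3] d x2y2 x1 z by auto
qed

lemma card_Diff_Un_disjoint:
  assumes "finite T" "R \<subseteq> T" "finite N" "N \<inter> T = {}"
  shows "card (T - R \<union> N) = card T - card R + card N"
proof -
  have "card (T - R \<union> N) = card (T - R) + card N"
    using assms by (intro card_Un_disjoint) auto
  then show ?thesis
    using assms(1,2) by (simp add: card_Diff_subset finite_subset)
qed

text \<open>
  Every pair of points of a new triple not containing p lies in one of the three
  removed triples, so the new triples meet the remaining ones in at most one point.
\<close>

lemma triple_packing_trade:
  assumes T: "triple_packing n T" and p: "p < n" "\<forall>X\<in>T. p \<notin> X"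
    and in1: "{c, x1, y1} \<in> T" and in2: "{c, x2, y2} \<in> T" and in3: "{x1, x2, z} \<in> T"
    and ne: "{c, x1, y1} \<noteq> {c, x2, y2}"
  shows "\<exists>G. triple_packing n G \<and> card G = Suc (card T)"
proof -
  define Old where "Old = {{c, x1, y1}, {c, x2, y2}, {x1, x2, z}}"
  define New where "New = {{p, c, y1}, {p, x2, y2}, {p, x1, z}, {c, x1, x2}}"
  have dist: "distinct [p, c, x1, y1, x2, y2, z]"
    by (rule triple_packing_trade_distinct[OF T p(2) in1 in2 in3 ne])
  note uniq = triple_packing_pair_unique[OF T]
  have "triple_packing n (T - Old \<union> New)"
  proof (rule triple_packing_Un[OF triple_packing_subset[OF T]])
    show "triple_packing n New"
    proof (rule triple_packingI)
      show "New \<subseteq> Pow {..<n}"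
        using T in1 in2 in3 p(1) unfolding triple_packing_def New_def by auto
      show "card X = 3" if "X \<in> New" for X
        using that dist unfolding New_def by auto
      show "X = Y" if "X \<in> New" "Y \<in> New" "u \<noteq> v" "{u, v} \<subseteq> X" "{u, v} \<subseteq> Y" for X Y u v
        using that dist unfolding New_def by auto
    qed
    fix R N u v
    assume R: "R \<in> T - Old" and N: "N \<in> New" and uv: "u \<noteq> v" "{u, v} \<subseteq> R" "{u, v} \<subseteq> N"
    have "{u, v} \<subseteq> N - {p}"
      using R uv(2,3) p(2) by blast
    then have "\<exists>B\<in>Old. {u, v} \<subseteq> B"
      using N unfolding New_def Old_def by auto
    then obtain B where B: "B \<in> Old" "{u, v} \<subseteq> B"
      by (rule bexE)
    moreover have "B \<in> T"
      using B(1) in1 in2 in3 unfolding Old_def by blast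
    ultimately show "R = N"
      using uniq[of R B u v] R uv by blast
  qed simp
  moreover have "card (T - Old \<union> New) = Suc (card T)"
  proof -
    have "finite T"
      using T finite_subset[of T "Pow {..<n}"] by (simp add: triple_packing_def)
    have "{c, x1, x2} \<notin> T"
    proof
      assume "{c, x1, x2} \<in> T"
      then have "{c, x1, x2} = {c, x1, y1}"
        by (rule uniq[OF _ in1, where u = c and v = x1]) (use dist in auto)
      then show False
        using dist by (metis distinct_length_2_or_more insertCI insertE singletonD)
    qed
    then have "New \<inter> T = {}"
      using p(2) unfolding New_def by auto
    moreover have "Old \<subseteq> T" "finite New"
      using in1 in2 in3 unfolding Old_def New_def by simp_all
    moreover have "card Old = 3" "card New = 4"
      using dist unfolding Old_def New_def by (simp_all add: card_insert_if insert_eq_iff, blast+)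
    ultimately show ?thesis
      using card_Diff_Un_disjoint[OF \<open>finite T\<close>, of Old New] card_mono[OF \<open>finite T\<close>, of Old]
      by simp
  qed
  ultimately show ?thesis
    by blast
qed

lemma triple_packing_add_point:
  assumes T: "triple_packing n T" and p: "p < n" "p \<notin> V"
    and V: "finite V" "4 \<le> card V" "\<And>X. X \<in> T \<Longrightarrow> X \<subseteq> V"
    and cover: "\<And>x y. x \<in> V \<Longrightarrow> y \<in> V \<Longrightarrow> x \<noteq> y \<Longrightarrow> \<exists>X\<in>T. {x, y} \<subseteq> X"
  shows "\<exists>G. triple_packing n G \<and> card G = Suc (card T)"
proof -
  have card3: "card X = 3" if "X \<in> T" for X
    using T that by (simp add: triple_packing_def)
  obtain c where c: "c \<in> V"
    using V(2) by fastforce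
  have "card (V - {c}) \<noteq> 0"
    using V(1,2) c by simp
  then obtain x1 where x1: "x1 \<in> V" "x1 \<noteq> c"
    by (metis Diff_iff card.empty ex_in_conv singletonI)
  obtain T1 where T1: "T1 \<in> T" "{c, x1} \<subseteq> T1"
    using cover[OF c x1(1)] x1(2) by blast
  then obtain y1 where y1: "T1 = {c, x1, y1}"
    using card3 x1(2) by (metis card_3_obtain insert_subset)
  have "card V - card T1 \<le> card (V - T1)"
    using diff_card_le_card_Diff[of T1 V] card3[OF T1(1)] by (simp add: card_ge_0_finite)
  then have "card (V - T1) \<noteq> 0"
    using V(2) card3[OF T1(1)] by linarith
  then obtain x2 where x2: "x2 \<in> V" "x2 \<notin> T1"
    by (metis Diff_iff card.empty ex_in_conv)
  then have "x2 \<noteq> c" "x2 \<noteq> x1"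
    using T1(2) by auto
  obtain T2 where T2: "T2 \<in> T" "{c, x2} \<subseteq> T2"
    using cover[OF c x2(1)] \<open>x2 \<noteq> c\<close> by blast
  then obtain y2 where y2: "T2 = {c, x2, y2}"
    using card3 \<open>x2 \<noteq> c\<close> by (metis card_3_obtain insert_subset)
  obtain T3 where T3: "T3 \<in> T" "{x1, x2} \<subseteq> T3"
    using cover[OF x1(1) x2(1)] \<open>x2 \<noteq> x1\<close> by fastforce
  then obtain z where z: "T3 = {x1, x2, z}"
    using card3 \<open>x2 \<noteq> x1\<close> by (metis card_3_obtain insert_subset)
  have "T1 \<noteq> T2"
    using T2(2) x2(2) by blast
  moreover have "\<forall>X\<in>T. p \<notin> X"
    using V(3) p(2) by blast
  ultimately show ?thesis
    using T1(1) T2(1) T3(1) unfolding y1 y2 z by (intro triple_packing_trade[OF T p(1)])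
qed

section \<open>Codes of weight at most three\<close>

locale weight3_code =
  fixes n :: nat and F :: "nat set set"
  assumes code: "set_code n 4 F" and weight_le_3: "X \<in> F \<Longrightarrow> card X \<le> 3"
begin

lemma member_subset: "X \<in> F \<Longrightarrow> X \<subseteq> {..<n}"
  using code by (auto simp: set_code_def)

lemma finite_member: "X \<in> F \<Longrightarrow> finite X"
  using member_subset finite_subset by blast

lemma finite_code: "finite F"
  using code finite_subset[of F "Pow {..<n}"] by (simp add: set_code_def)

lemma card_add_ge:
  assumes "X \<in> F" "Y \<in> F" "X \<noteq> Y"
  shows "4 + 2 * card (X \<inter> Y) \<le> card X + card Y"
proof -
  have "4 \<le> card (sym_diff X Y)"
    using code assms by (simp add: set_code_def)
  then show ?thesis
    using card_sym_diff_add_card_Int[OF finite_member finite_member, of X Y] assms(1,2) by linarith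
qed

lemma pair_member_disjoint:
  assumes "P \<in> F" "card P = 2" "Y \<in> F" "Y \<noteq> P"
  shows "P \<inter> Y = {}" "2 \<le> card Y"
proof -
  have "card (P \<inter> Y) = 0" "2 \<le> card Y"
    using card_add_ge[OF assms(1,3) assms(4)[symmetric]] weight_le_3[OF assms(3)] assms(2)
    by linarith+
  then show "P \<inter> Y = {}" "2 \<le> card Y"
    using finite_member[OF assms(1)] by simp_all
qed

lemma singleton_member:
  assumes "{p} \<in> F" "Y \<in> F" "Y \<noteq> {p}"
  shows "card Y = 3" "p \<notin> Y"
  using card_add_ge[OF assms(1,2) assms(3)[symmetric]] weight_le_3[OF assms(2)]
  by (auto split: if_splits)

lemma empty_member: "{} \<in> F \<Longrightarrow> F = {{}}"
  using card_add_ge[of "{}"] weight_le_3 by fastforce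

lemma triple_packing_triples: "triple_packing n {X \<in> F. card X = 3}"
  using code by (auto simp: triple_packing_iff_set_code set_code_def)

lemma packing_if_empty_member:
  assumes "{} \<in> F" "3 \<le> n"
  shows "\<exists>G. triple_packing n G \<and> card F \<le> card G"
proof -
  have "triple_packing n {{0, 1, 2}}"
    using assms(2) by (auto simp: triple_packing_def)
  then show ?thesis
    using empty_member[OF assms(1)] by force
qed

lemma packing_if_point_avoids_pairs:
  assumes P0: "P0 \<in> F" "card P0 = 2"
    and x: "x < n" "\<And>P. P \<in> F \<Longrightarrow> card P = 2 \<Longrightarrow> x \<notin> P"
  shows "\<exists>G. triple_packing n G \<and> card F \<le> card G"
proof -
  define Pr Tr where "Pr = {P \<in> F. card P = 2}" and "Tr = {X \<in> F. card X = 3}"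
  have disj: "Q \<inter> X = {}" if "Q \<in> Pr" "X \<in> F" "X \<noteq> Q" for Q X
    using pair_member_disjoint(1) that by (simp add: Pr_def)
  have x_notin: "x \<notin> Q" if "Q \<in> Pr" for Q
    using x(2) that by (simp add: Pr_def)
  have image: "triple_packing n (insert x ` Pr)" "card (insert x ` Pr) = card Pr"
    using member_subset disj x_notin x(1) by (intro triple_packing_insert_image; auto simp: Pr_def)+
  have "triple_packing n (Tr \<union> insert x ` Pr)"
  proof (rule triple_packing_Un[OF _ image(1)])
    show "triple_packing n Tr"
      unfolding Tr_def by (rule triple_packing_triples)
    fix X Y u v
    assume X: "X \<in> Tr" and Y: "Y \<in> insert x ` Pr" and uv: "u \<noteq> v" "{u, v} \<subseteq> X" "{u, v} \<subseteq> Y"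
    obtain Q where Q: "Q \<in> Pr" "Y = insert x Q"
      using Y by blast
    have "Q \<inter> X \<noteq> {}"
      using Q(2) uv by (cases "u = x") auto
    moreover have "X \<noteq> Q"
      using X Q(1) by (auto simp: Tr_def Pr_def)
    ultimately show "X = Y"
      using disj[OF Q(1)] X by (auto simp: Tr_def)
  qed
  moreover have "card (Tr \<union> insert x ` Pr) = card F"
  proof -
    have "card X = 2 \<or> card X = 3" if "X \<in> F" for X
      using pair_member_disjoint(2)[OF P0 that] weight_le_3[OF that] P0(2) by (cases "X = P0") auto
    then have "F = Tr \<union> Pr"
      by (auto simp: Tr_def Pr_def)
    moreover have "Tr \<inter> Pr = {}"
      by (auto simp: Tr_def Pr_def)
    moreover have "Tr \<inter> insert x ` Pr = {}"
    proof (rule ccontr)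
      assume "Tr \<inter> insert x ` Pr \<noteq> {}"
      then obtain Q where Q: "Q \<in> Pr" "insert x Q \<in> F"
        by (auto simp: Tr_def)
      then have "Q \<inter> insert x Q = {}"
        by (rule disj) (use x_notin[OF Q(1)] in blast)
      moreover have "Q \<noteq> {}"
        using Q(1) by (auto simp: Pr_def)
      ultimately show False
        by blast
    qed
    moreover have "finite Tr" "finite Pr"
      using finite_code by (simp_all add: Tr_def Pr_def)
    ultimately show ?thesis
      using image(2) by (simp add: card_Un_disjoint)
  qed
  ultimately show ?thesis
    by (metis order_refl)
qed

lemma packing_if_pairs_cover:
  assumes P0: "P0 \<in> F" "card P0 = 2"
    and cover: "\<And>x. x < n \<Longrightarrow> \<exists>P\<in>F. card P = 2 \<and> x \<in> P" and n: "n = 3 \<or> 5 \<le> n"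
  shows "\<exists>G. triple_packing n G \<and> card F \<le> card G"
proof -
  have pairs: "card X = 2" if X: "X \<in> F" for X
  proof (rule ccontr)
    assume "card X \<noteq> 2"
    then have "X \<noteq> P0"
      using P0(2) by blast
    then have "X \<noteq> {}"
      using pair_member_disjoint(2)[OF P0 X] by auto
    then obtain y where "y \<in> X"
      by blast
    then obtain P where P: "P \<in> F" "card P = 2" "y \<in> P"
      using cover member_subset[OF X] by blast
    then have "P \<inter> X = {}"
      using pair_member_disjoint(1)[OF P(1,2) X] \<open>card X \<noteq> 2\<close> by auto
    then show False
      using \<open>y \<in> X\<close> P(3) by blast
  qed
  have disj: "Q \<inter> Q' = {}" if "Q \<in> F" "Q' \<in> F" "Q \<noteq> Q'" for Q Q'
    using pair_member_disjoint(1)[OF that(1) pairs[OF that(1)] that(2)] that(3) by blast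
  have "\<Union>F = {..<n}"
    using cover member_subset by blast
  then have "n = card (\<Union>F)"
    by simp
  also have "\<dots> = sum card F"
    using disj finite_member by (intro card_Union_disjoint) (auto simp: pairwise_def disjnt_def)
  also have "\<dots> = 2 * card F"
    using pairs by simp
  finally have "3 \<le> card F"
    using n by presburger
  moreover have "F \<subseteq> Pow {..<n}"
    using code by (simp add: set_code_def)
  ultimately have "\<exists>G. triple_packing n G \<and> card G = card F"
    by (intro triple_packing_of_matching pairs disj)
  then show ?thesis
    by (metis order_refl)
qed

lemma packing_if_pair_avoids_members:
  assumes p: "{p} \<in> F" and xy: "x < n" "y < n" "x \<noteq> y" "x \<noteq> p" "y \<noteq> p"
    and avoid: "\<And>X. X \<in> F \<Longrightarrow> \<not> {x, y} \<subseteq> X"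
  shows "\<exists>G. triple_packing n G \<and> card F \<le> card G"
proof -
  define T where "T = F - {{p}}"
  have T: "card X = 3" "p \<notin> X" if "X \<in> T" for X
    using singleton_member[OF p] that by (auto simp: T_def)
  have "triple_packing n (T \<union> {{p, x, y}})"
  proof (rule triple_packing_Un[OF _ triple_packing_singleton])
    show "triple_packing n T"
      using triple_packing_subset[OF triple_packing_triples] T by (auto simp: T_def)
    show "{p, x, y} \<subseteq> {..<n}" "card {p, x, y} = 3"
      using member_subset[OF p] xy by auto
    fix X Y u v
    assume X: "X \<in> T" and Y: "Y \<in> {{p, x, y}}" and uv: "u \<noteq> v" "{u, v} \<subseteq> X" "{u, v} \<subseteq> Y"
    then have "{u, v} = {x, y}"
      using T(2) by auto
    then show "X = Y"
      using avoid[of X] X uv(2) by (simp add: T_def)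
  qed
  moreover have "card (T \<union> {{p, x, y}}) = card F"
  proof -
    have "finite T" "{p, x, y} \<notin> T"
      using finite_code T(2) by (auto simp: T_def)
    then have "card (T \<union> {{p, x, y}}) = Suc (card T)"
      by simp
    also have "\<dots> = card F"
      unfolding T_def by (rule card_Suc_Diff1[OF finite_code p])
    finally show ?thesis .
  qed
  ultimately show ?thesis
    by (metis order_refl)
qed

lemma packing_if_members_cover_pairs:
  assumes p: "{p} \<in> F" and n: "n = 3 \<or> 5 \<le> n"
    and cover: "\<And>x y. x < n \<Longrightarrow> y < n \<Longrightarrow> x \<noteq> y \<Longrightarrow> x \<noteq> p \<Longrightarrow> y \<noteq> p \<Longrightarrow> \<exists>X\<in>F. {x, y} \<subseteq> X"
  shows "\<exists>G. triple_packing n G \<and> card F \<le> card G"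
proof -
  define T where "T = F - {{p}}"
  define V where "V = {..<n} - {p}"
  have T: "card X = 3" "p \<notin> X" if "X \<in> T" for X
    using singleton_member[OF p] that by (auto simp: T_def)
  have "triple_packing n T"
    using triple_packing_subset[OF triple_packing_triples] T by (auto simp: T_def)
  have "p < n"
    using member_subset[OF p] by simp
  then have card_V: "card V = n - 1"
    by (simp add: V_def)
  have T_V: "X \<subseteq> V" if "X \<in> T" for X
    using member_subset T(2) that by (auto simp: T_def V_def)
  have cover_V: "\<exists>X\<in>T. {x, y} \<subseteq> X" if "x \<in> V" "y \<in> V" "x \<noteq> y" for x y
    using cover[of x y] that by (auto simp: V_def T_def)
  have "4 \<le> card V"
  proof (rule ccontr)
    assume "\<not> 4 \<le> card V"
    then have "card V = 2"
      using n card_V by auto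
    then obtain a b where "V = {a, b}" "a \<noteq> b"
      by (auto simp: card_2_iff)
    then obtain X where "X \<in> T" "X \<subseteq> {a, b}"
      using cover_V[of a b] T_V by blast
    then show False
      using T(1) card_mono[of "{a, b}" X] \<open>a \<noteq> b\<close> by auto
  qed
  moreover have "p \<notin> V" "finite V"
    by (simp_all add: V_def)
  ultimately have "\<exists>G. triple_packing n G \<and> card G = Suc (card T)"
    using triple_packing_add_point[OF \<open>triple_packing n T\<close> \<open>p < n\<close>] T_V cover_V by blast
  moreover have "Suc (card T) = card F"
    unfolding T_def by (rule card_Suc_Diff1[OF finite_code p])
  ultimately show ?thesis
    by (metis order_refl)
qed

lemma exists_triple_packing_ge:
  assumes n: "n = 3 \<or> 5 \<le> n"
  shows "\<exists>G. triple_packing n G \<and> card F \<le> card G"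
proof -
  consider "{} \<in> F" | P0 where "P0 \<in> F" "card P0 = 2" | p where "{p} \<in> F" | "\<forall>X\<in>F. card X = 3"
  proof (cases "\<forall>X\<in>F. card X = 3")
    case False
    then obtain X where "X \<in> F" "card X \<le> 2"
      using weight_le_3 by fastforce
    then show thesis
      using that finite_member[of X] by (auto simp: le_Suc_eq numeral_2_eq_2 card_1_singleton_iff)
  qed
  then show ?thesis
  proof cases
    case 1
    then show ?thesis
      using packing_if_empty_member n by auto
  next
    case (2 P0)
    show ?thesis
    proof (cases "\<exists>x<n. \<forall>P\<in>F. card P = 2 \<longrightarrow> x \<notin> P")
      case True
      then obtain x where "x < n" "\<And>P. P \<in> F \<Longrightarrow> card P = 2 \<Longrightarrow> x \<notin> P"
        by blast
      then show ?thesis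
        by (rule packing_if_point_avoids_pairs[OF 2])
    next
      case False
      then have "\<exists>P\<in>F. card P = 2 \<and> x \<in> P" if "x < n" for x
        using that by blast
      then show ?thesis
        by (rule packing_if_pairs_cover[OF 2 _ n])
    qed
  next
    case (3 p)
    show ?thesis
    proof (cases "\<exists>x y. x < n \<and> y < n \<and> x \<noteq> y \<and> x \<noteq> p \<and> y \<noteq> p \<and> (\<forall>X\<in>F. \<not> {x, y} \<subseteq> X)")
      case True
      then obtain x y where "x < n" "y < n" "x \<noteq> y" "x \<noteq> p" "y \<noteq> p"
        "\<And>X. X \<in> F \<Longrightarrow> \<not> {x, y} \<subseteq> X"
        by blast
      then show ?thesis
        by (rule packing_if_pair_avoids_members[OF 3])
    next
      case False
      then have "\<exists>X\<in>F. {x, y} \<subseteq> X" if "x < n" "y < n" "x \<noteq> y" "x \<noteq> p" "y \<noteq> p" for x y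
        using that by blast
      then show ?thesis
        by (rule packing_if_members_cover_pairs[OF 3 n])
    qed
  next
    case 4
    then have "triple_packing n F"
      using code by (simp add: triple_packing_iff_set_code)
    then show ?thesis
      by blast
  qed
qed

end

lemma Max_le_Max_if_dominated:
  fixes A B :: "'a::linorder set"
  assumes "finite A" "A \<noteq> {}" "finite B" "\<And>a. a \<in> A \<Longrightarrow> \<exists>b\<in>B. a \<le> b"
  shows "Max A \<le> Max B"
  using assms by (meson Max_ge Max_in order_trans)

lemma A_4_3_eq_Max_triple_packing: "A n 4 3 = Max {card G | G. triple_packing n G}"
  by (simp add: A_eq_Max_set_code triple_packing_iff_set_code)

lemma A'_4_3_eq_A_4_3:
  assumes "n = 3 \<or> 5 \<le> n"
  shows "A' n 4 3 = A n 4 3"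
proof -
  let ?codes = "{card F | F. set_code n 4 F \<and> F \<noteq> {} \<and> (\<forall>X\<in>F. card X \<le> 3)}"
  let ?packings = "{card G | G. triple_packing n G}"
  have fin: "finite ?codes" "finite ?packings"
    using finite_card_set_codes[of n 4] by (simp_all add: triple_packing_iff_set_code)
  have "set_code n 4 {{}}"
    by (simp add: set_code_def)
  then have "1 \<in> ?codes"
    by force
  have "triple_packing n {}"
    by (simp add: triple_packing_def)
  then have "0 \<in> ?packings"
    by force
  have "Max ?codes \<le> Max ?packings"
  proof (rule Max_le_Max_if_dominated[OF fin(1) _ fin(2)])
    fix k assume "k \<in> ?codes"
    then obtain F where "k = card F" "weight3_code n F"
      by (auto simp: weight3_code_def)
    then show "\<exists>l\<in>?packings. k \<le> l"
      using weight3_code.exists_triple_packing_ge[OF _ assms] by blast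
  qed (use \<open>1 \<in> ?codes\<close> in blast)
  moreover have "Max ?packings \<le> Max ?codes"
  proof (rule Max_le_Max_if_dominated[OF fin(2) _ fin(1)])
    fix k assume "k \<in> ?packings"
    then obtain G where G: "k = card G" "triple_packing n G"
      by blast
    show "\<exists>l\<in>?codes. k \<le> l"
    proof (cases "G = {}")
      case True
      then show ?thesis
        using G(1) \<open>1 \<in> ?codes\<close> by auto
    next
      case False
      then have "card G \<in> ?codes"
        using G(2) by (force simp: triple_packing_iff_set_code)
      then show ?thesis
        using G(1) by blast
    qed
  qed (use \<open>0 \<in> ?packings\<close> in blast)
  ultimately show ?thesis
    by (simp add: A'_eq_Max_set_code A_4_3_eq_Max_triple_packing)
qed

lemma A'_eq_1_if_less:
  assumes "n < d"
  shows "A' n d e = 1"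
proof -
  have "set_code n d {{}}"
    by (simp add: set_code_def)
  then have "1 \<in> {card F | F. set_code n d F \<and> F \<noteq> {} \<and> (\<forall>X\<in>F. card X \<le> e)}"
    by force
  then show ?thesis
    unfolding A'_eq_Max_set_code
    by (intro Max_eqI finite_card_set_codes) (auto dest: set_code_card_le_1[OF _ assms])
qed

lemma A'_4_4_3: "A' 4 4 3 = 2"
proof -
  have "set_code 4 4 {{0}, {1, 2, 3}}"
    by (simp add: set_code_def lessThan_nat_numeral)
  moreover have "card {{0::nat}, {1, 2, 3}} = 2"
    by simp
  ultimately show ?thesis
    unfolding A'_eq_Max_set_code
    by (intro Max_eqI finite_card_set_codes) (auto dest: set_code_card_le_2, force)
qed

theorem corollary2:
  shows "(\<forall>n::nat. n > 0 \<and> n \<notin> {1, 2, 4} \<longrightarrow> A' n 4 3 = A n 4 3)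
    \<and> A' 1 4 3 = 1 \<and> A' 2 4 3 = 1 \<and> A' 4 4 3 = 2"
proof (intro conjI allI impI)
  fix n :: nat
  assume "n > 0 \<and> n \<notin> {1, 2, 4}"
  then have "n = 3 \<or> 5 \<le> n"
    by auto
  then show "A' n 4 3 = A n 4 3"
    by (rule A'_4_3_eq_A_4_3)
qed (simp_all add: A'_eq_1_if_less A'_4_4_3)

end
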